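(* Let $\Sigma\subseteq\widehat{\Sigma}$ be alphabets with $\Pi=\widehat{\Sigma}\setminus\Sigma$ finite, and let $R\subseteq\Sigma^*\times\Sigma^*$. If $D$ is a family of $\widehat{\Sigma}$-defining relations for $\Pi$ whose derived generator graph $\Gamma_D(D)$ is acyclic, then there exists a sequence of exactly $|\Pi|$ $\mathbf{Gen}(+)$ transformations between $\langle\Sigma\mid R\rangle$ and $\langle\widehat{\Sigma}\mid R\cup D\rangle$.
   Context: For an alphabet $\Sigma$, $\Sigma^*$ is the free monoid of words over $\Sigma$. For $R\subseteq\Sigma^*\times\Sigma^*$ (elements written $q\approx r$), the presentation $\langle\Sigma\mid R\rangle$ denotes the quotient of $\Sigma^*$ by the smallest congruence containing $R$. A $\mathbf{Gen}(+)$ transformation passes from a presentation $\langle\Sigma\mid R\rangle$ to $\langle\Sigma\cup\{x\}\mid R\cup\{x\approx w\}\rangle$ where $x\notin\Sigma$ is a new symbol and $w\in\Sigma^*$; a sequence of such transformations between two presentations is a chain of presentations starting at the first and ending at the second, each obtained from the previous one by one such transformation. A $\Sigma$-defining relation for $x\in\Sigma$ is a relation $x\approx w$ with $w\in\Sigma^*$; a family of $\Sigma$-defining relations for $\Pi\subseteq\Sigma$ is a set $\{r_x\mid x\in\Pi\}$ where each $r_x$ is a $\Sigma$-defining relation for $x$. The derived generator graph $\Gamma_D(D)$ of such a family $D$ is the directed graph with vertex set $\Pi$ and an edge $(x,y)$ whenever $y$ occurs in the right-hand side $w$ of the relation $x\approx w$ in $D$. A directed graph is acyclic if it has no directed path of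 positive length from a vertex to itself. *)

theory Defs
  imports Main
begin

text \<open>Words over an alphabet are lists; a relation q \<approx> r is a pair (q, r).
A presentation is a pair (alphabet, set of relations).\<close>

type_synonym 'a presentation = "'a set \<times> ('a list \<times> 'a list) set"

definition gen_plus :: "'a presentation \<Rightarrow> 'a presentation \<Rightarrow> bool" where
  "gen_plus P Q \<longleftrightarrow> (\<exists>x w. x \<notin> fst P \<and> w \<in> lists (fst P) \<and>
      Q = (insert x (fst P), insert ([x], w) (snd P)))"

definition gen_plus_seq :: "nat \<Rightarrow> 'a presentation \<Rightarrow> 'a presentation \<Rightarrow> bool" where
  "gen_plus_seq n P Q \<longleftrightarrow> (\<exists>ps. length ps = Suc n \<and> hd ps = P \<and> last ps = Q \<and>
      (\<forall>i < n. gen_plus (ps ! i) (ps ! Suc i)))"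

definition defining_rel :: "'a set \<Rightarrow> 'a \<Rightarrow> 'a list \<times> 'a list \<Rightarrow> bool" where
  "defining_rel \<Sigma> x r \<longleftrightarrow> (\<exists>w. r = ([x], w) \<and> w \<in> lists \<Sigma>)"

definition defining_family :: "'a set \<Rightarrow> 'a set \<Rightarrow> ('a list \<times> 'a list) set \<Rightarrow> bool" where
  "defining_family \<Sigma> \<Pi> D \<longleftrightarrow> (\<exists>r. D = r ` \<Pi> \<and> (\<forall>x\<in>\<Pi>. defining_rel \<Sigma> x (r x)))"

definition derived_graph :: "'a set \<Rightarrow> ('a list \<times> 'a list) set \<Rightarrow> ('a \<times> 'a) set" where
  "derived_graph \<Pi> D = {(x, y). x \<in> \<Pi> \<and> y \<in> \<Pi> \<and> (\<exists>w. ([x], w) \<in> D \<and> y \<in> set w)}"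

end

theory Submission
  imports Defs
begin

text \<open>Because the derived generator graph is finite and acyclic, every nonempty set of new
generators contains a generator x that occurs neither in the right-hand sides of the others nor in
its own. The others can therefore be adjoined first, by induction, and x last, by one Gen(+) step
whose right-hand side only uses generators already present.\<close>

lemma gen_plus_seq_0: "gen_plus_seq 0 P P"
  unfolding gen_plus_seq_def by (intro exI[of _ "[P]"]) simp

lemma gen_plus_seq_Suc:
  assumes "gen_plus_seq n P Q" and "gen_plus Q Q'"
  shows "gen_plus_seq (Suc n) P Q'"
proof -
  obtain ps where ps: "length ps = Suc n" "hd ps = P" "last ps = Q"
    and steps: "\<forall>i < n. gen_plus (ps ! i) (ps ! Suc i)"
    using assms(1) unfolding gen_plus_seq_def by blast
  have "ps \<noteq> []"
    using ps(1) by auto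
  then have "ps ! n = Q"
    using ps by (simp add: last_conv_nth)
  then have "\<forall>i < Suc n. gen_plus ((ps @ [Q']) ! i) ((ps @ [Q']) ! Suc i)"
    using ps(1) steps assms(2) by (auto simp: nth_append less_Suc_eq)
  then show ?thesis
    unfolding gen_plus_seq_def using ps \<open>ps \<noteq> []\<close>
    by (intro exI[of _ "ps @ [Q']"]) simp
qed

lemma gen_plus_insert:
  assumes "x \<notin> \<Sigma>" and "set w \<subseteq> \<Sigma>"
  shows "gen_plus (\<Sigma>, R) (insert x \<Sigma>, insert ([x], w) R)"
  unfolding gen_plus_def using assms by auto

lemma defining_family_iff:
  "defining_family \<Sigma> \<Pi> D \<longleftrightarrow>
    (\<exists>rhs. D = (\<lambda>x. ([x], rhs x)) ` \<Pi> \<and> (\<forall>x\<in>\<Pi>. set (rhs x) \<subseteq> \<Sigma>))"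
proof
  assume "defining_family \<Sigma> \<Pi> D"
  then obtain r where D: "D = r ` \<Pi>" and r: "\<forall>x\<in>\<Pi>. defining_rel \<Sigma> x (r x)"
    unfolding defining_family_def by blast
  have "r x = ([x], snd (r x)) \<and> set (snd (r x)) \<subseteq> \<Sigma>" if "x \<in> \<Pi>" for x
    using r that unfolding defining_rel_def by auto
  then show "\<exists>rhs. D = (\<lambda>x. ([x], rhs x)) ` \<Pi> \<and> (\<forall>x\<in>\<Pi>. set (rhs x) \<subseteq> \<Sigma>)"
    unfolding D by (intro exI[of _ "snd \<circ> r"]) (auto intro!: image_cong)
next
  assume "\<exists>rhs. D = (\<lambda>x. ([x], rhs x)) ` \<Pi> \<and> (\<forall>x\<in>\<Pi>. set (rhs x) \<subseteq> \<Sigma>)"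
  then show "defining_family \<Sigma> \<Pi> D"
    unfolding defining_family_def defining_rel_def by (auto simp: in_lists_conv_set)
qed

lemma derived_graph_image:
  "derived_graph \<Pi> ((\<lambda>x. ([x], rhs x)) ` \<Pi>) = {(x, y). x \<in> \<Pi> \<and> y \<in> \<Pi> \<and> y \<in> set (rhs x)}"
  unfolding derived_graph_def by auto

lemma gen_plus_seq_adjoin_acyclic:
  assumes "finite \<Pi>" and "\<Sigma> \<inter> \<Pi> = {}"
    and "\<forall>x\<in>\<Pi>. set (rhs x) \<subseteq> \<Sigma> \<union> \<Pi>"
    and "acyclic {(x, y). x \<in> \<Pi> \<and> y \<in> \<Pi> \<and> y \<in> set (rhs x)}"
  shows "gen_plus_seq (card \<Pi>) (\<Sigma>, R) (\<Sigma> \<union> \<Pi>, R \<union> (\<lambda>x. ([x], rhs x)) ` \<Pi>)"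
  using assms
proof (induction \<Pi> rule: finite_remove_induct)
  case empty
  show ?case by (simp add: gen_plus_seq_0)
next
  case (remove \<Pi>)
  define G where "G = {(x, y). x \<in> \<Pi> \<and> y \<in> \<Pi> \<and> y \<in> set (rhs x)}"
  have "acyclic G"
    using remove.prems(3) unfolding G_def .
  have "finite G"
    by (rule finite_subset[of _ "\<Pi> \<times> \<Pi>"]) (auto simp: G_def remove.hyps(1))
  then have "wf G"
    using \<open>acyclic G\<close> by (rule finite_acyclic_wf)
  then obtain x where "x \<in> \<Pi>" and source: "\<And>y. (y, x) \<in> G \<Longrightarrow> y \<notin> \<Pi>"
    using wfE_min[OF \<open>wf G\<close>] \<open>\<Pi> \<noteq> {}\<close> by blast
  have no_loop: "(x, x) \<notin> G"
    using \<open>acyclic G\<close> unfolding acyclic_def by (blast intro: r_into_trancl)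
  have "gen_plus_seq (card (\<Pi> - {x})) (\<Sigma>, R)
      (\<Sigma> \<union> (\<Pi> - {x}), R \<union> (\<lambda>x. ([x], rhs x)) ` (\<Pi> - {x}))"
  proof (rule remove.IH[OF \<open>x \<in> \<Pi>\<close>])
    show "\<Sigma> \<inter> (\<Pi> - {x}) = {}"
      using remove.prems(1) by blast
    show "\<forall>y\<in>\<Pi> - {x}. set (rhs y) \<subseteq> \<Sigma> \<union> (\<Pi> - {x})"
      using remove.prems(2) source unfolding G_def by blast
    show "acyclic {(y, z). y \<in> \<Pi> - {x} \<and> z \<in> \<Pi> - {x} \<and> z \<in> set (rhs y)}"
      by (rule acyclic_subset[OF remove.prems(3)]) auto
  qed
  moreover have "gen_plus (\<Sigma> \<union> (\<Pi> - {x}), R \<union> (\<lambda>x. ([x], rhs x)) ` (\<Pi> - {x}))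
      (\<Sigma> \<union> \<Pi>, R \<union> (\<lambda>x. ([x], rhs x)) ` \<Pi>)"
  proof -
    have "x \<notin> \<Sigma> \<union> (\<Pi> - {x})" and "set (rhs x) \<subseteq> \<Sigma> \<union> (\<Pi> - {x})"
      using remove.prems(1,2) no_loop \<open>x \<in> \<Pi>\<close> unfolding G_def by auto
    from gen_plus_insert[OF this, of "R \<union> (\<lambda>x. ([x], rhs x)) ` (\<Pi> - {x})"]
    moreover have "insert x (\<Sigma> \<union> (\<Pi> - {x})) = \<Sigma> \<union> \<Pi>"
      using \<open>x \<in> \<Pi>\<close> by blast
    moreover have "insert ([x], rhs x) (R \<union> (\<lambda>x. ([x], rhs x)) ` (\<Pi> - {x}))
        = R \<union> (\<lambda>x. ([x], rhs x)) ` \<Pi>"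
      using \<open>x \<in> \<Pi>\<close> by blast
    ultimately show ?thesis
      by simp
  qed
  moreover have "card \<Pi> = Suc (card (\<Pi> - {x}))"
    using remove.hyps(1) \<open>x \<in> \<Pi>\<close> by (rule card_Suc_Diff1[symmetric])
  ultimately show ?case
    by (simp add: gen_plus_seq_Suc)
qed

theorem theorem7:
  fixes \<Sigma> \<Sigma>h :: "'a set" and R D :: "('a list \<times> 'a list) set"
  assumes "\<Sigma> \<subseteq> \<Sigma>h"
    and "finite (\<Sigma>h - \<Sigma>)"
    and "R \<subseteq> lists \<Sigma> \<times> lists \<Sigma>"
    and "defining_family \<Sigma>h (\<Sigma>h - \<Sigma>) D"
    and "acyclic (derived_graph (\<Sigma>h - \<Sigma>) D)"
  shows "gen_plus_seq (card (\<Sigma>h - \<Sigma>)) (\<Sigma>, R) (\<Sigma>h, R \<union> D)"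
proof -
  obtain rhs where D: "D = (\<lambda>x. ([x], rhs x)) ` (\<Sigma>h - \<Sigma>)"
    and rhs: "\<forall>x\<in>\<Sigma>h - \<Sigma>. set (rhs x) \<subseteq> \<Sigma>h"
    using assms(4) unfolding defining_family_iff by blast
  have \<Sigma>h: "\<Sigma> \<union> (\<Sigma>h - \<Sigma>) = \<Sigma>h"
    using assms(1) by blast
  have "gen_plus_seq (card (\<Sigma>h - \<Sigma>)) (\<Sigma>, R) (\<Sigma> \<union> (\<Sigma>h - \<Sigma>), R \<union> D)"
    unfolding D
  proof (rule gen_plus_seq_adjoin_acyclic)
    show "\<forall>x\<in>\<Sigma>h - \<Sigma>. set (rhs x) \<subseteq> \<Sigma> \<union> (\<Sigma>h - \<Sigma>)"
      using rhs \<Sigma>h by simp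
    show "acyclic {(x, y). x \<in> \<Sigma>h - \<Sigma> \<and> y \<in> \<Sigma>h - \<Sigma> \<and> y \<in> set (rhs x)}"
      using assms(5) unfolding D derived_graph_image .
  qed (use assms(2) in auto)
  then show ?thesis
    unfolding \<Sigma>h .
qed

end
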